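(* Let $N,T\in\mathbb{N}^*$, $\rho>0$, $\alpha\in\mathbb{R}$. Let $W$ be a symmetric $N\times N$ random matrix whose entries on and above the diagonal are i.i.d. $\mathcal{N}(0,\rho^2/N^{2\alpha})$. Let $B_{T,N}$ be its generalised matrix of moments of order $T$. For $l_1,l_2\in\{0,\ldots,T\}$: (i) if $l_1+l_2$ is odd then $B_{T,N}(l_1,l_2)=0$; (ii) if $l_1+l_2$ is even and $\frac{l_1+l_2}{2}+1\le N$, writing $s=l_1+l_2$, \[ \frac{\rho^{s}}{\frac s2+1}\binom{s}{s/2}\frac{N(N-1)\cdots(N-\frac s2)}{N^{\alpha s}}\le B_{T,N}(l_1,l_2)\le\frac{\rho^{s}}{\frac s2+1}\binom{s}{s/2}N^{s(\frac12-\alpha)+1}+\rho^{s}m_{s}\left(\frac s2\right)^{s}N^{s(\frac12-\alpha)}. \]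
   Context: $m_t:=\mathbb{E}X^t$ for a standard Gaussian $X$. Generalised matrix of moments: for $i\in[N]$, $\beta_{i,0}=1$, $\beta_{i,l}=\sum_{i_1,\ldots,i_l=1}^N W_{ii_1}W_{i_1i_2}\cdots W_{i_{l-1}i_l}$ for $l\ge1$, and $B_{T,N}(l_1,l_2)=\mathbb{E}\sum_{i=1}^N\beta_{i,l_1}\beta_{i,l_2}$, $0\le l_1,l_2\le T$. *)

theory Defs
  imports "HOL-Probability.Probability"
begin

definition gauss_moment :: "nat \<Rightarrow> real" where
  "gauss_moment t = integral\<^sup>L (density lborel std_normal_density) (\<lambda>x. x ^ t)"

definition upper_idx :: "nat \<Rightarrow> (nat \<times> nat) set" where
  "upper_idx N = {(i, j). i \<le> j \<and> j < N}"

text \<open>Joint law of the i.i.d. entries W_ij (i <= j), each N(0, rho^2 / N^(2 alpha)),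
  i.e. standard deviation rho / N^alpha.\<close>
definition entry_space :: "nat \<Rightarrow> real \<Rightarrow> real \<Rightarrow> (nat \<times> nat \<Rightarrow> real) measure" where
  "entry_space N \<rho> \<alpha> =
     PiM (upper_idx N) (\<lambda>_. density lborel (normal_density 0 (\<rho> / (real N powr \<alpha>))))"

definition symW :: "(nat \<times> nat \<Rightarrow> real) \<Rightarrow> nat \<Rightarrow> nat \<Rightarrow> real" where
  "symW x i j = x (min i j, max i j)"

definition beta :: "nat \<Rightarrow> (nat \<times> nat \<Rightarrow> real) \<Rightarrow> nat \<Rightarrow> nat \<Rightarrow> real" where
  "beta N x i l = (\<Sum>p \<in> {p. length p = l \<and> set p \<subseteq> {..<N}}.
                     \<Prod>k<l. symW x ((i # p) ! k) ((i # p) ! Suc k))"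

definition Bmom :: "nat \<Rightarrow> real \<Rightarrow> real \<Rightarrow> nat \<Rightarrow> nat \<Rightarrow> real" where
  "Bmom N \<rho> \<alpha> l1 l2 =
     integral\<^sup>L (entry_space N \<rho> \<alpha>) (\<lambda>x. \<Sum>i<N. beta N x i l1 * beta N x i l2)"

end

theory Submission
  imports Defs
begin

text \<open>Expanding the products \<open>beta i l1 * beta i l2\<close> and summing over \<open>i\<close> writes the
  moment \<open>B(l1, l2)\<close> as a sum over all walks with \<open>s = l1 + l2\<close> steps of the expectation
  of the product of the matrix entries along the walk. By independence, this expectation is
  \<open>(\<rho> / N powr \<alpha>) ^ s\<close> times the product over the distinct edges \<open>e\<close> of the Gaussian
  moments \<open>m (c e)\<close>, where \<open>c e\<close> counts the traversals of \<open>e\<close>. For odd \<open>s\<close> some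
  \<open>c e\<close> is odd and every term vanishes.

  For \<open>s = 2 n\<close>, a walk with at least \<open>n + 1\<close> distinct vertices whose edges are all
  traversed an even number of times is the depth-first traversal of a tree with \<open>n\<close> edges,
  each traversed exactly twice. It contributes \<open>1\<close>, and these walks correspond bijectively to
  pairs of a Dyck path of length \<open>2 n\<close> (there are \<open>(2 n choose n) / (n + 1)\<close> of them, by the
  reflection principle) and \<open>n + 1\<close> distinct vertex labels (\<open>N (N - 1) ... (N - n)\<close>
  choices). Every other walk with a non-zero contribution has at most \<open>n\<close> vertices; there are
  at most \<open>n ^ (2 n) * N ^ n\<close> such walks, and each contributes at most \<open>m (2 n)\<close> because
  \<open>m a * m b \<le> m (a + b)\<close>.\<close>

section \<open>Walks and their edges\<close>

definition uedge :: "nat \<Rightarrow> nat \<Rightarrow> nat \<times> nat" where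
  "uedge u v = (min u v, max u v)"

fun walk_edges :: "nat list \<Rightarrow> (nat \<times> nat) list" where
  "walk_edges (u # v # vs) = uedge u v # walk_edges (v # vs)"
| "walk_edges _ = []"

lemma uedge_commute: "uedge u v = uedge v u"
  by (auto simp: uedge_def)

lemma uedge_inj: "uedge u v = uedge u v' \<Longrightarrow> v = v'"
  by (auto simp: uedge_def min_def max_def split: if_splits)

lemma length_walk_edges: "length (walk_edges vs) = length vs - 1"
  by (induction vs rule: walk_edges.induct) auto

lemma walk_edges_append:
  "vs \<noteq> [] \<Longrightarrow> walk_edges (vs @ ws) = walk_edges vs @ walk_edges (last vs # ws)"
  by (induction vs rule: walk_edges.induct) auto

lemma walk_edges_snoc:
  "vs \<noteq> [] \<Longrightarrow> walk_edges (vs @ [v]) = walk_edges vs @ [uedge (last vs) v]"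
  by (simp add: walk_edges_append)

lemma walk_edges_rev: "walk_edges (rev vs) = rev (walk_edges vs)"
proof (induction vs rule: walk_edges.induct)
  case (1 u v vs)
  have "walk_edges (rev (u # v # vs)) = walk_edges (rev (v # vs) @ [u])" by simp
  also have "\<dots> = walk_edges (rev (v # vs)) @ [uedge v u]" by (subst walk_edges_snoc) auto
  finally show ?case using 1 by (simp add: uedge_commute)
qed auto

lemma walk_edges_endpoints:
  "e \<in> set (walk_edges vs) \<Longrightarrow> fst e \<in> set vs \<and> snd e \<in> set vs \<and> fst e \<le> snd e"
  by (induction vs rule: walk_edges.induct) (auto simp: uedge_def)

lemma uedge_notin_walk_edges: "v \<notin> set vs \<Longrightarrow> uedge u v \<notin> set (walk_edges vs)"
  using walk_edges_endpoints[of "uedge u v" vs] by (auto simp: uedge_def min_def max_def)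

lemma uedge_in_walk_edges_distinct:
  assumes "distinct (u # vs)" "uedge u v \<in> set (walk_edges (u # vs))"
  shows "vs = v # tl vs"
proof (cases vs)
  case (Cons w ws)
  have "uedge u v \<notin> set (walk_edges vs)"
    using assms(1) uedge_notin_walk_edges[of u vs v] by (simp add: uedge_commute)
  with assms(2) Cons have "uedge u v = uedge u w" by simp
  with Cons show ?thesis using uedge_inj[of u v w] by simp
qed (use assms in simp)

lemma card_walk_edges_append_ge:
  "vs \<noteq> [] \<Longrightarrow>
    card (set (walk_edges vs)) + card (set ws - set vs) \<le> card (set (walk_edges (vs @ ws)))"
proof (induction ws arbitrary: vs)
  case Nil
  then show ?case by simp
next
  case (Cons v ws)
  have edges_snoc: "set (walk_edges (vs @ [v])) = insert (uedge (last vs) v) (set (walk_edges vs))"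
    using Cons.prems by (simp add: walk_edges_snoc)
  have IH: "card (set (walk_edges (vs @ [v]))) + card (set ws - set (vs @ [v]))
      \<le> card (set (walk_edges (vs @ v # ws)))"
    using Cons.IH[of "vs @ [v]"] by simp
  show ?case
  proof (cases "v \<in> set vs")
    case True
    then have "set (v # ws) - set vs = set ws - set (vs @ [v])" by auto
    moreover have "card (set (walk_edges vs)) \<le> card (set (walk_edges (vs @ [v])))"
      using edges_snoc by (simp add: card_insert_le)
    ultimately show ?thesis using IH by simp
  next
    case False
    then have "card (set (walk_edges (vs @ [v]))) = Suc (card (set (walk_edges vs)))"
      using edges_snoc uedge_notin_walk_edges by simp
    moreover have "set (v # ws) - set vs = insert v (set ws - set (vs @ [v]))"
      using False by auto
    ultimately show ?thesis using IH by simp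
  qed
qed

lemma card_set_le_card_walk_edges:
  "vs \<noteq> [] \<Longrightarrow> card (set vs) \<le> card (set (walk_edges vs)) + 1"
proof -
  assume "vs \<noteq> []"
  then obtain v ws where vs: "vs = [v] @ ws" by (cases vs) auto
  have "card (set vs) = card (set ws - set [v]) + 1"
    using vs by (simp add: card.insert_remove)
  also have "\<dots> \<le> card (set (walk_edges vs)) + 1"
    using card_walk_edges_append_ge[of "[v]" ws] vs by simp
  finally show ?thesis .
qed

section \<open>Dyck paths and the reflection principle\<close>

fun goes_negative :: "int \<Rightarrow> bool list \<Rightarrow> bool" where
  "goes_negative h [] = False"
| "goes_negative h (b # bs) =
     (let h' = (if b then h + 1 else h - 1) in h' = -1 \<or> goes_negative h' bs)"

definition dyck_paths :: "nat \<Rightarrow> bool list set" where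
  "dyck_paths n = {bs. length bs = 2 * n \<and> count_list bs True = n \<and> \<not> goes_negative 0 bs}"

fun reflect_after_dip :: "int \<Rightarrow> bool list \<Rightarrow> bool list" where
  "reflect_after_dip h [] = []"
| "reflect_after_dip h (b # bs) =
     (let h' = (if b then h + 1 else h - 1)
      in b # (if h' = -1 then map Not bs else reflect_after_dip h' bs))"

lemma count_list_True_False: "count_list bs True + count_list bs False = length bs"
  by (induction bs) auto

lemma count_list_map_Not: "count_list (map Not bs) b = count_list bs (\<not> b)"
  by (induction bs) auto

lemma reflect_after_dip_involution: "reflect_after_dip h (reflect_after_dip h bs) = bs"
  by (induction bs arbitrary: h) (auto simp: Let_def comp_def)

lemma length_reflect_after_dip [simp]: "length (reflect_after_dip h bs) = length bs"
  by (induction bs arbitrary: h) (auto simp: Let_def)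

lemma goes_negative_reflect_after_dip: "goes_negative h (reflect_after_dip h bs) = goes_negative h bs"
  by (induction bs arbitrary: h) (auto simp: Let_def)

lemma height_reflect_after_dip:
  "goes_negative h bs \<Longrightarrow>
    h + int (count_list (reflect_after_dip h bs) True) - int (count_list (reflect_after_dip h bs) False)
    = -2 - (h + int (count_list bs True) - int (count_list bs False))"
proof (induction bs arbitrary: h)
  case (Cons b bs)
  define h' where "h' = (if b then h + 1 else h - 1)"
  show ?case
  proof (cases "h' = -1")
    case True
    then show ?thesis using h'_def by (cases b) (auto simp: count_list_map_Not)
  next
    case False
    with Cons.prems have "goes_negative h' bs" by (simp add: h'_def Let_def)
    from Cons.IH[OF this] False show ?thesis by (cases b) (auto simp: h'_def Let_def)
  qed
qed simp

lemma goes_negative_if_final_negative: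
  "0 \<le> h \<Longrightarrow> h + int (count_list bs True) - int (count_list bs False) < 0 \<Longrightarrow> goes_negative h bs"
proof (induction bs arbitrary: h)
  case (Cons b bs)
  then show ?case
    by (cases b; cases "h = 0") (auto simp: Let_def)
qed simp

definition bool_lists :: "nat \<Rightarrow> nat \<Rightarrow> bool list set" where
  "bool_lists m k = {bs. length bs = m \<and> count_list bs True = k}"

lemma finite_bool_lists: "finite (bool_lists m k)"
  unfolding bool_lists_def
  by (rule finite_subset[OF _ finite_lists_length_eq[of "UNIV :: bool set" m]]) auto

lemma card_bool_lists: "card (bool_lists m k) = m choose k"
proof (induction m arbitrary: k)
  case 0
  have "bool_lists 0 k = (if k = 0 then {[]} else {})" by (auto simp: bool_lists_def)
  then show ?case by simp
next
  case (Suc m)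
  show ?case
  proof (cases k)
    case 0
    then have "bool_lists (Suc m) k = Cons False ` bool_lists m 0"
      by (auto simp: bool_lists_def length_Suc_conv split: if_splits)
    then show ?thesis using Suc.IH[of 0] 0 by (simp add: card_image)
  next
    case (Suc j)
    then have "bool_lists (Suc m) k = Cons True ` bool_lists m j \<union> Cons False ` bool_lists m k"
      by (auto simp: bool_lists_def length_Suc_conv split: if_splits)
    moreover have "card (Cons True ` bool_lists m j \<union> Cons False ` bool_lists m k)
        = (m choose j) + (m choose k)"
      by (subst card_Un_disjoint) (auto simp: card_image Suc.IH finite_bool_lists)
    ultimately show ?thesis using Suc by simp
  qed
qed

text \<open>The reflection principle: reflecting a path with \<open>n + 1\<close> up-steps and \<open>n + 1\<close>
  down-steps after its first visit to \<open>-1\<close> produces a path ending at \<open>-2\<close>, and conversely.\<close>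
lemma bij_betw_reflect_after_dip:
  "bij_betw (reflect_after_dip 0)
     {bs \<in> bool_lists (2 * Suc n) (Suc n). goes_negative 0 bs} (bool_lists (2 * Suc n) n)"
proof (rule bij_betw_byWitness[where f' = "reflect_after_dip 0"])
  show "reflect_after_dip 0 ` {bs \<in> bool_lists (2 * Suc n) (Suc n). goes_negative 0 bs}
      \<subseteq> bool_lists (2 * Suc n) n"
  proof (rule image_subsetI, clarify)
    fix bs assume bs: "bs \<in> bool_lists (2 * Suc n) (Suc n)" "goes_negative 0 bs"
    let ?rs = "reflect_after_dip 0 bs"
    have "int (count_list ?rs True) - int (count_list ?rs False) = -2"
      using height_reflect_after_dip[OF bs(2)] bs(1) count_list_True_False[of bs]
      by (simp add: bool_lists_def)
    with count_list_True_False[of ?rs] bs(1) show "?rs \<in> bool_lists (2 * Suc n) n"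
      by (simp add: bool_lists_def)
  qed
  show "reflect_after_dip 0 ` bool_lists (2 * Suc n) n
      \<subseteq> {bs \<in> bool_lists (2 * Suc n) (Suc n). goes_negative 0 bs}"
  proof (rule image_subsetI)
    fix bs assume bs: "bs \<in> bool_lists (2 * Suc n) n"
    let ?rs = "reflect_after_dip 0 bs"
    have counts: "count_list bs True = n" "count_list bs False = n + 2"
      using bs count_list_True_False[of bs] by (auto simp: bool_lists_def)
    then have dip: "goes_negative 0 bs" by (intro goes_negative_if_final_negative) auto
    have "int (count_list ?rs True) - int (count_list ?rs False) = 0"
      using height_reflect_after_dip[OF dip] counts by simp
    with count_list_True_False[of ?rs] bs
    show "?rs \<in> {bs \<in> bool_lists (2 * Suc n) (Suc n). goes_negative 0 bs}"
      using dip by (auto simp: bool_lists_def goes_negative_reflect_after_dip)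
  qed
qed (simp_all add: reflect_after_dip_involution)

lemma card_dyck_paths: "card (dyck_paths n) * (n + 1) = (2 * n) choose n"
proof (cases n)
  case 0
  then have "dyck_paths n = {[]}" by (auto simp: dyck_paths_def)
  then show ?thesis using 0 by simp
next
  case (Suc m)
  let ?bad = "{bs \<in> bool_lists (2 * n) n. goes_negative 0 bs}"
  have "bool_lists (2 * n) n = dyck_paths n \<union> ?bad" "dyck_paths n \<inter> ?bad = {}"
    by (auto simp: bool_lists_def dyck_paths_def)
  then have "(2 * n) choose n = card (dyck_paths n) + card ?bad"
    using finite_bool_lists[of "2 * n" n] card_bool_lists[of "2 * n" n]
    by (metis card_Un_disjoint finite_Un)
  also have "card ?bad = (2 * n) choose m"
    using bij_betw_same_card[OF bij_betw_reflect_after_dip[of m]] Suc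
    by (simp add: card_bool_lists)
  finally have "(2 * n) choose n = card (dyck_paths n) + ((2 * n) choose m)" .
  moreover have "((2 * n) choose n) * n = ((2 * n) choose m) * (n + 1)"
  proof -
    have "2 * n = Suc (m + Suc m)" using Suc by simp
    then show ?thesis
      using Suc_times_binomial_add[of m "Suc m"] Suc by (metis Suc_eq_plus1 mult.commute)
  qed
  ultimately show ?thesis by (simp add: algebra_simps)
qed

lemma central_binomial_eq_card_dyck_paths:
  "real ((2 * n) choose n) = real (card (dyck_paths n)) * (real n + 1)"
  using card_dyck_paths[of n] by (metis of_nat_1 of_nat_add of_nat_mult)

section \<open>Tree walks\<close>

fun explore :: "bool list \<Rightarrow> nat list \<Rightarrow> nat list \<Rightarrow> nat list" where
  "explore [] stack fresh = []"
| "explore (b # bs) stack fresh =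
     (if b then hd fresh # explore bs (hd fresh # stack) (tl fresh)
      else hd (tl stack) # explore bs (tl stack) fresh)"

fun fresh_flags :: "nat list \<Rightarrow> nat list \<Rightarrow> bool list" where
  "fresh_flags seen [] = []"
| "fresh_flags seen (v # vs) = (v \<notin> set seen) # fresh_flags (seen @ [v]) vs"

fun fresh_vertices :: "nat list \<Rightarrow> nat list \<Rightarrow> nat list" where
  "fresh_vertices seen [] = []"
| "fresh_vertices seen (v # vs) =
     (if v \<in> set seen then fresh_vertices (seen @ [v]) vs else v # fresh_vertices (seen @ [v]) vs)"

lemma length_explore [simp]: "length (explore bs stack fresh) = length bs"
  by (induction bs arbitrary: stack fresh) auto

lemma set_fresh_vertices: "set (fresh_vertices seen vs) = set vs - set seen"
  by (induction seen vs rule: fresh_vertices.induct) auto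

lemma distinct_fresh_vertices: "distinct (fresh_vertices seen vs)"
  by (induction seen vs rule: fresh_vertices.induct) (auto simp: set_fresh_vertices)

lemma count_fresh_flags: "count_list (fresh_flags seen vs) True = length (fresh_vertices seen vs)"
  by (induction seen vs rule: fresh_flags.induct) auto

lemma length_fresh_flags: "length (fresh_flags seen vs) = length vs"
  by (induction seen vs rule: fresh_flags.induct) auto

text \<open>The stack is the path from the root to the current vertex in the tree explored so far;
  the edges traversed an odd number of times are exactly those on this path.\<close>
definition explore_state :: "nat list \<Rightarrow> nat list \<Rightarrow> nat list \<Rightarrow> bool" where
  "explore_state pre stack fresh \<longleftrightarrow>
     stack \<noteq> [] \<and> hd stack = last pre \<and> distinct stack \<and> set stack \<subseteq> set pre \<and>
     distinct fresh \<and> set fresh \<inter> set pre = {} \<and>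
     (\<forall>e. odd (count_list (walk_edges pre) e) \<longleftrightarrow> e \<in> set (walk_edges stack))"

lemma explore_state_odd_iff:
  "explore_state pre stack fresh \<Longrightarrow>
    odd (count_list (walk_edges pre) e) \<longleftrightarrow> e \<in> set (walk_edges stack)"
  unfolding explore_state_def by blast

lemma explore_state_fresh_step:
  assumes state: "explore_state pre stack (v # fresh)"
  shows "explore_state (pre @ [v]) (v # stack) fresh"
proof -
  obtain u stack' where stack: "stack = u # stack'" and u: "u = last pre"
    using state by (cases stack) (auto simp: explore_state_def)
  have "pre \<noteq> []" using state stack by (auto simp: explore_state_def)
  have v: "v \<notin> set pre" using state by (auto simp: explore_state_def)
  have "uedge u v \<notin> set (walk_edges pre)"
    using uedge_notin_walk_edges[OF v] .
  then have "uedge u v \<notin> set (walk_edges stack)"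
    using state by (metis explore_state_def count_list_0_iff even_zero)
  moreover have "walk_edges (v # stack) = uedge u v # walk_edges stack"
    using stack by (simp add: uedge_commute)
  moreover have "walk_edges (pre @ [v]) = walk_edges pre @ [uedge u v]"
    using \<open>pre \<noteq> []\<close> u by (simp add: walk_edges_snoc)
  ultimately show ?thesis
    using state v \<open>uedge u v \<notin> set (walk_edges pre)\<close> by (auto simp: explore_state_def)
qed

lemma explore_state_back_step:
  assumes state: "explore_state pre (u # v # stack) fresh"
  shows "explore_state (pre @ [v]) (v # stack) fresh"
proof -
  have u: "u = last pre" and "pre \<noteq> []" and v: "v \<in> set pre"
    using state by (auto simp: explore_state_def)
  have new: "uedge u v \<notin> set (walk_edges (v # stack))"
    using state uedge_notin_walk_edges[of u "v # stack" v]
    by (auto simp: explore_state_def uedge_commute)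
  have odd_pre:
    "odd (count_list (walk_edges pre) e) \<longleftrightarrow> e = uedge u v \<or> e \<in> set (walk_edges (v # stack))"
    for e using explore_state_odd_iff[OF state, of e] u by simp
  have edges_snoc: "walk_edges (pre @ [v]) = walk_edges pre @ [uedge u v]"
    using \<open>pre \<noteq> []\<close> u by (simp add: walk_edges_snoc)
  have "odd (count_list (walk_edges (pre @ [v])) e) \<longleftrightarrow> e \<in> set (walk_edges (v # stack))"
    for e using odd_pre[of e] edges_snoc new by auto
  with state v show ?thesis by (auto simp: explore_state_def)
qed

lemma explore_spec:
  assumes "explore_state pre stack fresh" "count_list bs True \<le> length fresh"
    "\<not> goes_negative (int (length stack) - 1) bs"
  shows "fresh_flags pre (explore bs stack fresh) = bs
    \<and> fresh_vertices pre (explore bs stack fresh) = take (count_list bs True) fresh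
    \<and> (int (count_list bs True) + int (length stack) = int (count_list bs False) + 1 \<longrightarrow>
         (\<forall>e. even (count_list (walk_edges (pre @ explore bs stack fresh)) e)))"
  using assms
proof (induction bs arbitrary: pre stack fresh)
  case Nil
  have "length stack = 1 \<Longrightarrow> walk_edges stack = []"
    by (cases stack rule: walk_edges.cases) auto
  with Nil.prems(1) show ?case by (auto simp: explore_state_def)
next
  case (Cons b bs)
  have fresh_outside: "set fresh \<inter> set pre = {}" and stack_inside: "set stack \<subseteq> set pre"
    using Cons.prems(1) by (auto simp: explore_state_def)
  show ?case
  proof (cases b)
    case True
    then obtain v fresh' where fresh: "fresh = v # fresh'"
      using Cons.prems(2) by (cases fresh) auto
    have "explore_state (pre @ [v]) (v # stack) fresh'"
      using Cons.prems(1) fresh by (simp add: explore_state_fresh_step)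
    with Cons.IH[of "pre @ [v]" "v # stack" fresh'] Cons.prems True fresh fresh_outside
    show ?thesis by (auto simp: Let_def)
  next
    case False
    then obtain u v stack' where stack: "stack = u # v # stack'"
      using Cons.prems(1,3) by (cases stack rule: walk_edges.cases) (auto simp: explore_state_def)
    have "explore_state (pre @ [v]) (v # stack') fresh"
      using Cons.prems(1) stack by (simp add: explore_state_back_step)
    with Cons.IH[of "pre @ [v]" "v # stack'" fresh] Cons.prems False stack fresh_outside stack_inside
    show ?thesis by (auto simp: Let_def)
  qed
qed

lemma explore_state_odd_edge_to_parent:
  assumes state: "explore_state pre stack fresh"
    and odd: "odd (count_list (walk_edges pre) (uedge (last pre) v))"
  shows "\<exists>stack'. stack = last pre # v # stack'"
proof -
  obtain stack' where stack: "stack = last pre # stack'"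
    using state by (cases stack) (auto simp: explore_state_def)
  have "uedge (last pre) v \<in> set (walk_edges stack)"
    using explore_state_odd_iff[OF state] odd by blast
  then have "stack' = v # tl stack'"
    using state stack uedge_in_walk_edges_distinct[of "last pre" stack' v]
    by (simp add: explore_state_def)
  with stack show ?thesis by blast
qed

lemma explore_reconstructs:
  assumes "w = pre @ rest"
    and twice: "\<forall>e\<in>set (walk_edges w). count_list (walk_edges w) e = 2"
    and returns: "\<forall>p v r. w = p @ v # r \<longrightarrow> p \<noteq> [] \<longrightarrow> v \<in> set p \<longrightarrow>
                    uedge (last p) v \<in> set (walk_edges p)"
    and "explore_state pre stack (fresh_vertices pre rest)"
  shows "rest = explore (fresh_flags pre rest) stack (fresh_vertices pre rest)
    \<and> \<not> goes_negative (int (length stack) - 1) (fresh_flags pre rest)"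
  using assms(1,4)
proof (induction rest arbitrary: pre stack)
  case (Cons v rest)
  have "pre \<noteq> []" using Cons.prems(2) by (cases stack) (auto simp: explore_state_def)
  show ?case
  proof (cases "v \<in> set pre")
    case False
    have "explore_state (pre @ [v]) (v # stack) (fresh_vertices (pre @ [v]) rest)"
      using Cons.prems(2) False by (simp add: explore_state_fresh_step)
    with Cons.IH[of "pre @ [v]" "v # stack"] Cons.prems(1) False show ?thesis
      by (auto simp: Let_def)
  next
    case True
    define e where "e = uedge (last pre) v"
    have "e \<in> set (walk_edges pre)"
      using returns Cons.prems(1) \<open>pre \<noteq> []\<close> True by (auto simp: e_def)
    moreover have "walk_edges w = walk_edges pre @ [e] @ walk_edges (v # rest)"
      using Cons.prems(1) \<open>pre \<noteq> []\<close> walk_edges_append[of "pre @ [v]" rest]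
      by (simp add: walk_edges_snoc e_def)
    ultimately have "count_list (walk_edges pre) e = 1"
      using twice by (simp add: count_list_0_iff[symmetric]) (metis count_list_0_iff add_is_1)
    then obtain stack' where stack: "stack = last pre # v # stack'"
      using explore_state_odd_edge_to_parent[OF Cons.prems(2), of v] by (auto simp: e_def)
    have "explore_state (pre @ [v]) (v # stack') (fresh_vertices (pre @ [v]) rest)"
      using Cons.prems(2) True stack by (simp add: explore_state_back_step)
    with Cons.IH[of "pre @ [v]" "v # stack'"] Cons.prems(1) True stack show ?thesis
      by (auto simp: Let_def)
  qed
qed simp

definition tree_walk :: "nat \<Rightarrow> nat \<Rightarrow> nat list \<Rightarrow> bool" where
  "tree_walk n N w \<longleftrightarrow> length w = 2 * n + 1 \<and> set w \<subseteq> {..<N} \<and> n + 1 \<le> card (set w) \<and>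
     (\<forall>e. even (count_list (walk_edges w) e))"

lemma tree_walk_even_count: "tree_walk n N w \<Longrightarrow> even (count_list (walk_edges w) e)"
  unfolding tree_walk_def by blast

lemma tree_walk_count_ge_2:
  assumes "tree_walk n N w" "e \<in> set (walk_edges w)"
  shows "2 \<le> count_list (walk_edges w) e"
proof -
  have "count_list (walk_edges w) e \<noteq> 0" using assms(2) by (simp add: count_list_0_iff)
  with tree_walk_even_count[OF assms(1), of e] show ?thesis by presburger
qed

lemma tree_walk_card:
  assumes "tree_walk n N w"
  shows "card (set w) = n + 1" "card (set (walk_edges w)) = n"
proof -
  let ?es = "walk_edges w"
  have "2 * card (set ?es) = (\<Sum>e\<in>set ?es. 2)" by simp
  also have "\<dots> \<le> (\<Sum>e\<in>set ?es. count_list ?es e)"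
    by (intro sum_mono tree_walk_count_ge_2[OF assms])
  also have "\<dots> = 2 * n"
    using assms sum_count_set[of ?es "set ?es"] by (simp add: tree_walk_def length_walk_edges)
  finally have "card (set ?es) \<le> n" by simp
  moreover have "w \<noteq> []" "n + 1 \<le> card (set w)"
    using assms by (auto simp: tree_walk_def)
  moreover note card_set_le_card_walk_edges[of w]
  ultimately show "card (set w) = n + 1" "card (set ?es) = n" by linarith+
qed

text \<open>The \<open>2 n\<close> traversals cover only \<open>n\<close> distinct edges, each at least twice.\<close>
lemma tree_walk_count_walk_edges:
  assumes "tree_walk n N w" "e \<in> set (walk_edges w)"
  shows "count_list (walk_edges w) e = 2"
proof (rule ccontr)
  let ?es = "walk_edges w"
  assume "count_list ?es e \<noteq> 2"
  then have "2 < count_list ?es e" using tree_walk_count_ge_2[OF assms] by simp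
  then have "(\<Sum>e\<in>set ?es. 2) < (\<Sum>e\<in>set ?es. count_list ?es e)"
    using assms(2) tree_walk_count_ge_2[OF assms(1)] by (intro sum_strict_mono_ex1) auto
  also have "\<dots> = 2 * n"
    using assms sum_count_set[of ?es "set ?es"] by (simp add: tree_walk_def length_walk_edges)
  finally show False using tree_walk_card(2)[OF assms(1)] by simp
qed

lemma tree_walk_returns_along_edge:
  assumes "tree_walk n N w" "w = p @ v # r" "p \<noteq> []" "v \<in> set p"
  shows "uedge (last p) v \<in> set (walk_edges p)"
proof (rule ccontr)
  assume new: "uedge (last p) v \<notin> set (walk_edges p)"
  have "card (set p) \<le> card (set (walk_edges p)) + 1"
    using card_set_le_card_walk_edges[OF assms(3)] .
  also have "\<dots> = card (set (walk_edges (p @ [v])))"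
    using new assms(3) by (simp add: walk_edges_snoc)
  finally have "card (set p) + card (set r - set p) \<le> card (set (walk_edges w))"
    using card_walk_edges_append_ge[of "p @ [v]" r] assms(2,4) by (simp add: insert_absorb)
  moreover have "card (set w) = card (set p) + card (set r - set p)"
    using assms(2,4) card_Un_disjoint[of "set p" "set r - set p"] by (simp add: insert_absorb)
  ultimately show False using tree_walk_card[OF assms(1)] by simp
qed

definition dyck_walk :: "bool list \<Rightarrow> nat list \<Rightarrow> nat list" where
  "dyck_walk bs vs = hd vs # explore bs [hd vs] (tl vs)"

definition walk_dyck_path :: "nat list \<Rightarrow> bool list" where
  "walk_dyck_path w = fresh_flags [hd w] (tl w)"

definition walk_vertex_order :: "nat list \<Rightarrow> nat list" where
  "walk_vertex_order w = hd w # fresh_vertices [hd w] (tl w)"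

definition distinct_lists :: "nat \<Rightarrow> nat \<Rightarrow> nat list set" where
  "distinct_lists k N = {vs. length vs = k \<and> distinct vs \<and> set vs \<subseteq> {..<N}}"

lemma explore_state_initial: "distinct (v # vs) \<Longrightarrow> explore_state [v] [v] vs"
  by (auto simp: explore_state_def)

lemma set_walk_vertex_order: "w \<noteq> [] \<Longrightarrow> set (walk_vertex_order w) = set w"
  by (cases w) (auto simp: walk_vertex_order_def set_fresh_vertices)

lemma distinct_walk_vertex_order: "distinct (walk_vertex_order w)"
  by (simp add: walk_vertex_order_def distinct_fresh_vertices set_fresh_vertices)

lemma dyck_walk_tree_walk:
  assumes bs: "bs \<in> dyck_paths n" and vs: "vs \<in> distinct_lists (n + 1) N"
  shows "tree_walk n N (dyck_walk bs vs) \<and> walk_dyck_path (dyck_walk bs vs) = bs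
    \<and> walk_vertex_order (dyck_walk bs vs) = vs"
proof -
  obtain v vs' where vs_eq: "vs = v # vs'" using vs by (cases vs) (auto simp: distinct_lists_def)
  have counts: "count_list bs True = n" "count_list bs False = n"
    using bs count_list_True_False[of bs] by (auto simp: dyck_paths_def)
  have spec: "fresh_flags [v] (explore bs [v] vs') = bs
    \<and> fresh_vertices [v] (explore bs [v] vs') = take n vs'
    \<and> (\<forall>e. even (count_list (walk_edges ([v] @ explore bs [v] vs')) e))"
    using explore_spec[OF explore_state_initial, of v vs' bs] bs vs vs_eq counts
    by (auto simp: dyck_paths_def distinct_lists_def)
  have w: "dyck_walk bs vs = v # explore bs [v] vs'" by (simp add: dyck_walk_def vs_eq)
  have order: "walk_vertex_order (dyck_walk bs vs) = vs"
    using spec w vs vs_eq by (simp add: walk_vertex_order_def distinct_lists_def)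
  have "set (dyck_walk bs vs) = set vs"
    using set_walk_vertex_order[of "dyck_walk bs vs"] order w by simp
  then have "tree_walk n N (dyck_walk bs vs)"
    using spec w bs vs by (simp add: tree_walk_def dyck_paths_def distinct_lists_def distinct_card)
  with spec w order show ?thesis by (simp add: walk_dyck_path_def)
qed

lemma tree_walk_decode:
  assumes w: "tree_walk n N w"
  shows "walk_dyck_path w \<in> dyck_paths n \<and> walk_vertex_order w \<in> distinct_lists (n + 1) N
    \<and> dyck_walk (walk_dyck_path w) (walk_vertex_order w) = w"
proof -
  obtain v rest where w_eq: "w = [v] @ rest" using w by (cases w) (auto simp: tree_walk_def)
  have "rest = explore (fresh_flags [v] rest) [v] (fresh_vertices [v] rest)
    \<and> \<not> goes_negative 0 (fresh_flags [v] rest)"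
    using explore_reconstructs[OF w_eq _ _ explore_state_initial]
      tree_walk_count_walk_edges[OF w] tree_walk_returns_along_edge[OF w]
    by (simp add: distinct_fresh_vertices set_fresh_vertices)
  moreover have "length (walk_vertex_order w) = n + 1"
    using tree_walk_card(1)[OF w] w_eq
      distinct_card[OF distinct_walk_vertex_order, of w] set_walk_vertex_order[of w] by simp
  ultimately show ?thesis
    using w w_eq distinct_walk_vertex_order[of w] set_walk_vertex_order[of w]
    by (auto simp: walk_dyck_path_def walk_vertex_order_def dyck_walk_def dyck_paths_def
        distinct_lists_def tree_walk_def count_fresh_flags length_fresh_flags)
qed

lemma bij_betw_dyck_walk:
  "bij_betw (\<lambda>(bs, vs). dyck_walk bs vs) (dyck_paths n \<times> distinct_lists (n + 1) N)
     {w. tree_walk n N w}"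
  by (rule bij_betw_byWitness[where f' = "\<lambda>w. (walk_dyck_path w, walk_vertex_order w)"])
    (use dyck_walk_tree_walk tree_walk_decode in fastforce)+

lemma card_tree_walks:
  "card {w. tree_walk n N w} = card (dyck_paths n) * card (distinct_lists (n + 1) N)"
  using bij_betw_same_card[OF bij_betw_dyck_walk] by (simp add: card_cartesian_product)

section \<open>Gaussian moments and walk weights\<close>

lemma has_bochner_integral_normal_power:
  assumes "0 < \<sigma>"
  shows "has_bochner_integral (density lborel (normal_density 0 \<sigma>)) (\<lambda>x. x ^ c)
     (\<sigma> ^ c * (if even c then fact c / (2 ^ (c div 2) * fact (c div 2)) else 0))"
proof (rule has_bochner_integral_density)
  show "has_bochner_integral lborel (\<lambda>x. normal_density 0 \<sigma> x *\<^sub>R x ^ c)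
      (\<sigma> ^ c * (if even c then fact c / (2 ^ (c div 2) * fact (c div 2)) else 0))"
  proof (cases "even c")
    case True
    then obtain k where k: "c = 2 * k" by blast
    have "(\<sigma>\<^sup>2) ^ k = \<sigma> ^ c"
      using k by (simp flip: power_mult)
    then have "fact (2 * k) / ((2 / \<sigma>\<^sup>2) ^ k * fact k) = \<sigma> ^ c * (fact c / (2 ^ k * fact k))"
      using assms k by (simp add: power_divide field_simps)
    then show ?thesis
      using normal_moment_even[OF assms, of 0 k] k by simp
  next
    case False
    then obtain k where "c = 2 * k + 1" using oddE by blast
    then show ?thesis using normal_moment_odd[OF assms, of 0 k] False by simp
  qed
qed auto

lemma gauss_moment_eq:
  "gauss_moment c = (if even c then fact c / (2 ^ (c div 2) * fact (c div 2)) else 0)"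
  unfolding gauss_moment_def
  using has_bochner_integral_integral_eq[OF has_bochner_integral_normal_power[of 1 c]] by simp

lemma has_bochner_integral_normal_power_gauss_moment:
  "0 < \<sigma> \<Longrightarrow>
    has_bochner_integral (density lborel (normal_density 0 \<sigma>)) (\<lambda>x. x ^ c) (\<sigma> ^ c * gauss_moment c)"
  using has_bochner_integral_normal_power by (simp add: gauss_moment_eq)

lemma gauss_moment_nonneg: "0 \<le> gauss_moment c"
  by (simp add: gauss_moment_eq)

lemma gauss_moment_odd: "odd c \<Longrightarrow> gauss_moment c = 0"
  by (simp add: gauss_moment_eq)

lemma gauss_moment_0 [simp]: "gauss_moment 0 = 1"
  by (simp add: gauss_moment_eq)

lemma gauss_moment_2 [simp]: "gauss_moment 2 = 1"
  by (simp add: gauss_moment_eq)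

lemma gauss_moment_Suc_Suc: "gauss_moment (Suc (Suc c)) = (c + 1) * gauss_moment c"
proof (cases "even c")
  case True
  then obtain k where k: "c = 2 * k" by blast
  have "(fact (Suc (Suc c)) :: real) / (2 ^ Suc k * fact (Suc k))
      = ((2 * real k + 2) * ((2 * real k + 1) * fact c)) / ((2 * real k + 2) * (2 ^ k * fact k))"
    using k by (simp add: algebra_simps)
  also have "\<dots> = (real c + 1) * (fact c / (2 ^ k * fact k))"
    using k by (subst mult_divide_mult_cancel_left) auto
  finally show ?thesis
    using True k by (simp add: gauss_moment_eq)
qed (simp add: gauss_moment_eq)

lemma gauss_moment_mult_le: "gauss_moment a * gauss_moment b \<le> gauss_moment (a + b)"
proof (induction a rule: less_induct)
  case (less a)
  consider "a = 0" | "a = 1" | a' where "a = Suc (Suc a')"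
    by (metis One_nat_def not0_implies_Suc)
  then show ?case
  proof cases
    case 3
    have "gauss_moment a * gauss_moment b = (a' + 1) * (gauss_moment a' * gauss_moment b)"
      using 3 by (simp add: gauss_moment_Suc_Suc)
    also have "\<dots> \<le> (a' + 1) * gauss_moment (a' + b)"
      using less.IH[of a'] 3 by (intro mult_left_mono) auto
    also have "\<dots> \<le> (a' + b + 1) * gauss_moment (a' + b)"
      by (intro mult_right_mono gauss_moment_nonneg) auto
    also have "\<dots> = gauss_moment (a + b)"
      using 3 gauss_moment_Suc_Suc[of "a' + b"] by simp
    finally show ?thesis .
  qed (simp_all add: gauss_moment_odd gauss_moment_nonneg)
qed

lemma prod_gauss_moment_le:
  "finite A \<Longrightarrow> (\<Prod>e\<in>A. gauss_moment (f e)) \<le> gauss_moment (\<Sum>e\<in>A. f e)"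
proof (induction A rule: finite_induct)
  case (insert x A)
  then have "(\<Prod>e\<in>insert x A. gauss_moment (f e)) \<le> gauss_moment (f x) * gauss_moment (\<Sum>e\<in>A. f e)"
    by (simp add: mult_left_mono gauss_moment_nonneg)
  also have "\<dots> \<le> gauss_moment (\<Sum>e\<in>insert x A. f e)"
    using insert gauss_moment_mult_le by simp
  finally show ?case .
qed simp

text \<open>The expectation of the product of the entries along the walk, for entries of unit variance.\<close>
definition walk_weight :: "nat list \<Rightarrow> real" where
  "walk_weight w = (\<Prod>e\<in>set (walk_edges w). gauss_moment (count_list (walk_edges w) e))"

lemma walk_weight_nonneg: "0 \<le> walk_weight w"
  unfolding walk_weight_def by (intro prod_nonneg) (simp add: gauss_moment_nonneg)

lemma walk_weight_le: "walk_weight w \<le> gauss_moment (length (walk_edges w))"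
  unfolding walk_weight_def
  using prod_gauss_moment_le[of "set (walk_edges w)" "count_list (walk_edges w)"]
    sum_count_set[of "walk_edges w" "set (walk_edges w)"]
  by simp

lemma walk_weight_odd_count:
  assumes "odd (count_list (walk_edges w) e)"
  shows "walk_weight w = 0"
proof -
  have "e \<in> set (walk_edges w)" using assms by (metis count_list_0_iff even_zero)
  then show ?thesis
    unfolding walk_weight_def using assms by (auto simp: gauss_moment_odd intro!: bexI[of _ e])
qed

lemma walk_weight_odd_length:
  assumes "odd (length (walk_edges w))"
  shows "walk_weight w = 0"
proof -
  have "(\<Sum>e\<in>set (walk_edges w). count_list (walk_edges w) e) = length (walk_edges w)"
    by (rule sum_count_set) auto
  with assms obtain e where "odd (count_list (walk_edges w) e)"
    using dvd_sum[of "set (walk_edges w)" 2 "count_list (walk_edges w)"] by auto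
  then show ?thesis by (rule walk_weight_odd_count)
qed

lemma walk_weight_tree_walk: "tree_walk n N w \<Longrightarrow> walk_weight w = 1"
  by (simp add: walk_weight_def tree_walk_count_walk_edges)

section \<open>Counting walks\<close>

definition walks :: "nat \<Rightarrow> nat \<Rightarrow> nat list set" where
  "walks N k = {w. set w \<subseteq> {..<N} \<and> length w = k}"

lemma finite_walks: "finite (walks N k)"
  unfolding walks_def by (rule finite_lists_length_eq) simp

text \<open>A walk with at most \<open>n\<close> vertices is determined by a list of \<open>n\<close> labels that starts with
  its first vertex and contains all of its vertices, together with the positions in that list of
  the remaining \<open>2 n\<close> vertices.\<close>
lemma walk_few_vertices_decode:
  assumes w: "w \<in> walks N (2 * n + 1)" "card (set w) \<le> n"
  obtains L ps where "set L \<subseteq> {..<N}" "length L = n" "set ps \<subseteq> {..<n}" "length ps = 2 * n"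
    "w = map ((!) L) (0 # ps)"
proof -
  obtain a t where at: "w = a # t" using w by (cases w) (auto simp: walks_def)
  have order: "set (walk_vertex_order w) = set w" "length (walk_vertex_order w) = card (set w)"
    using at set_walk_vertex_order[of w] distinct_card[OF distinct_walk_vertex_order, of w] by auto
  define L where "L = walk_vertex_order w @ replicate (n - card (set w)) a"
  have L: "length L = n" "set L \<subseteq> {..<N}" "set w \<subseteq> set L" "L ! 0 = a"
    using order w at by (auto simp: L_def walks_def walk_vertex_order_def)
  have "\<exists>i. i < n \<and> L ! i = v" if "v \<in> set t" for v
  proof -
    have "v \<in> set L" using that at L(3) by auto
    then show ?thesis using L(1) by (simp add: in_set_conv_nth)
  qed
  then obtain pos where pos: "\<forall>v\<in>set t. pos v < n \<and> L ! pos v = v"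
    by metis
  have "map ((!) L \<circ> pos) t = t"
    using pos by (intro map_idI) auto
  then have "w = map ((!) L) (0 # map pos t)"
    using L(4) at by simp
  moreover have "set (map pos t) \<subseteq> {..<n}" "length (map pos t) = 2 * n"
    using pos w(1) at by (auto simp: walks_def)
  ultimately show thesis using that L(1,2) by blast
qed

lemma card_walks_few_vertices_le:
  "card {w \<in> walks N (2 * n + 1). card (set w) \<le> n} \<le> n ^ (2 * n) * N ^ n"
proof -
  let ?labels = "{L. set L \<subseteq> {..<N} \<and> length L = n}"
  let ?positions = "{ps. set ps \<subseteq> {..<n} \<and> length ps = 2 * n}"
  have finite: "finite (?labels \<times> ?positions)"
    by (simp add: finite_lists_length_eq)
  have "{w \<in> walks N (2 * n + 1). card (set w) \<le> n}
      \<subseteq> (\<lambda>(L, ps). map ((!) L) (0 # ps)) ` (?labels \<times> ?positions)"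
  proof clarify
    fix w assume "w \<in> walks N (2 * n + 1)" "card (set w) \<le> n"
    then obtain L ps where "L \<in> ?labels" "ps \<in> ?positions" "w = map ((!) L) (0 # ps)"
      by (rule walk_few_vertices_decode) blast
    then show "w \<in> (\<lambda>(L, ps). map ((!) L) (0 # ps)) ` (?labels \<times> ?positions)"
      by force
  qed
  then have "card {w \<in> walks N (2 * n + 1). card (set w) \<le> n}
      \<le> card ((\<lambda>(L, ps). map ((!) L) (0 # ps)) ` (?labels \<times> ?positions))"
    using finite by (intro card_mono) auto
  also have "\<dots> \<le> card (?labels \<times> ?positions)"
    using finite by (rule card_image_le)
  also have "\<dots> = N ^ n * n ^ (2 * n)"
    by (simp add: card_cartesian_product card_lists_length_eq)
  finally show ?thesis by (simp add: mult.commute)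
qed

section \<open>Walk expansion of the moment matrix\<close>

lemma walk_edges_subset_upper_idx: "set w \<subseteq> {..<N} \<Longrightarrow> set (walk_edges w) \<subseteq> upper_idx N"
  using walk_edges_endpoints[of _ w] by (force simp: upper_idx_def)

lemma finite_upper_idx: "finite (upper_idx N)"
  by (rule finite_subset[of _ "{..<N} \<times> {..<N}"]) (auto simp: upper_idx_def)

lemma prod_list_map_eq_prod_power_count:
  fixes f :: "'a \<Rightarrow> 'b :: comm_monoid_mult"
  assumes "finite A" "set xs \<subseteq> A"
  shows "prod_list (map f xs) = (\<Prod>a\<in>A. f a ^ count_list xs a)"
  using assms(2)
proof (induction xs)
  case (Cons y xs)
  have "(\<Prod>a\<in>A. f a ^ count_list (y # xs) a)
      = (\<Prod>a\<in>A. f a ^ count_list xs a * (if a = y then f a else 1))"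
    by (intro prod.cong) (auto simp: mult.commute)
  also have "\<dots> = (\<Prod>a\<in>A. f a ^ count_list xs a) * (\<Prod>a\<in>A. if a = y then f a else 1)"
    by (rule prod.distrib)
  also have "(\<Prod>a\<in>A. if a = y then f a else 1) = f y"
    using Cons.prems assms(1) by (simp add: prod.delta)
  finally show ?case using Cons by (simp add: mult.commute)
qed simp

lemma integrable_and_integral_walk_monomial:
  assumes "0 < \<rho>" "1 \<le> N" "set w \<subseteq> {..<N}"
  shows "integrable (entry_space N \<rho> \<alpha>) (\<lambda>x. prod_list (map x (walk_edges w)))"
    "integral\<^sup>L (entry_space N \<rho> \<alpha>) (\<lambda>x. prod_list (map x (walk_edges w)))
       = (\<rho> / real N powr \<alpha>) ^ length (walk_edges w) * walk_weight w"
proof -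
  define \<sigma> where "\<sigma> = \<rho> / real N powr \<alpha>"
  have "0 < \<sigma>" using assms by (simp add: \<sigma>_def)
  define G where "G = density lborel (normal_density 0 \<sigma>)"
  interpret G: prob_space G unfolding G_def by (rule prob_space_normal_density[OF \<open>0 < \<sigma>\<close>])
  interpret P: product_sigma_finite "\<lambda>_. G" ..
  let ?I = "upper_idx N" and ?es = "walk_edges w"
  have edges: "set ?es \<subseteq> ?I" using walk_edges_subset_upper_idx[OF assms(3)] .
  have space: "entry_space N \<rho> \<alpha> = Pi\<^sub>M ?I (\<lambda>_. G)" by (simp add: entry_space_def G_def \<sigma>_def)
  have monomial: "(\<lambda>x. prod_list (map x ?es)) = (\<lambda>x. \<Prod>e\<in>?I. x e ^ count_list ?es e)"
    by (intro ext prod_list_map_eq_prod_power_count finite_upper_idx edges)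
  have moment: "has_bochner_integral G (\<lambda>t. t ^ c) (\<sigma> ^ c * gauss_moment c)" for c
    unfolding G_def by (rule has_bochner_integral_normal_power_gauss_moment[OF \<open>0 < \<sigma>\<close>])
  then have integrable: "integrable G (\<lambda>t. t ^ count_list ?es e)" for e
    by (auto simp: has_bochner_integral_iff)
  show "integrable (entry_space N \<rho> \<alpha>) (\<lambda>x. prod_list (map x ?es))"
    unfolding space monomial by (rule P.product_integrable_prod[OF finite_upper_idx integrable])
  have "integral\<^sup>L (entry_space N \<rho> \<alpha>) (\<lambda>x. prod_list (map x ?es))
      = (\<Prod>e\<in>?I. integral\<^sup>L G (\<lambda>t. t ^ count_list ?es e))"
    unfolding space monomial by (rule P.product_integral_prod[OF finite_upper_idx integrable])
  also have "\<dots> = (\<Prod>e\<in>?I. \<sigma> ^ count_list ?es e) * (\<Prod>e\<in>?I. gauss_moment (count_list ?es e))"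
    using moment by (simp add: has_bochner_integral_iff prod.distrib)
  also have "(\<Prod>e\<in>?I. \<sigma> ^ count_list ?es e) = \<sigma> ^ (\<Sum>e\<in>?I. count_list ?es e)"
    by (simp add: power_sum)
  also have "(\<Sum>e\<in>?I. count_list ?es e) = length ?es"
    by (rule sum_count_set[OF edges finite_upper_idx])
  also have "(\<Prod>e\<in>?I. gauss_moment (count_list ?es e)) = walk_weight w"
    unfolding walk_weight_def
    by (rule prod.mono_neutral_right[OF finite_upper_idx edges]) (auto simp: count_list_0_iff)
  finally show "integral\<^sup>L (entry_space N \<rho> \<alpha>) (\<lambda>x. prod_list (map x ?es))
      = (\<rho> / real N powr \<alpha>) ^ length ?es * walk_weight w"
    by (simp add: \<sigma>_def)
qed

lemma prod_symW_eq_prod_list_walk_edges: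
  "(\<Prod>k<length vs - 1. symW x (vs ! k) (vs ! Suc k)) = prod_list (map x (walk_edges vs))"
proof (induction vs rule: walk_edges.induct)
  case (1 u v vs)
  have "(\<Prod>k<length (u # v # vs) - 1. symW x ((u # v # vs) ! k) ((u # v # vs) ! Suc k))
      = symW x u v * (\<Prod>k<length (v # vs) - 1. symW x ((v # vs) ! k) ((v # vs) ! Suc k))"
    by (simp add: prod.lessThan_Suc_shift del: prod.lessThan_Suc)
  with 1 show ?case by (simp add: symW_def uedge_def)
qed auto

lemma beta_eq_sum_walks:
  "beta N x i l = (\<Sum>p\<in>{p. length p = l \<and> set p \<subseteq> {..<N}}. prod_list (map x (walk_edges (i # p))))"
  unfolding beta_def
proof (intro sum.cong refl)
  fix p assume "p \<in> {p. length p = l \<and> set p \<subseteq> {..<N}}"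
  then show "(\<Prod>k<l. symW x ((i # p) ! k) ((i # p) ! Suc k)) = prod_list (map x (walk_edges (i # p)))"
    using prod_symW_eq_prod_list_walk_edges[of x "i # p"] by simp
qed

lemma prod_list_walk_edges_rev_append:
  fixes x :: "nat \<times> nat \<Rightarrow> real"
  shows "prod_list (map x (walk_edges (rev p @ i # q)))
    = prod_list (map x (walk_edges (i # p))) * prod_list (map x (walk_edges (i # q)))"
proof -
  have "walk_edges (rev p @ i # q) = rev (walk_edges (i # p)) @ walk_edges (i # q)"
    using walk_edges_append[of "rev p @ [i]" q] walk_edges_rev[of "i # p"] by simp
  then show ?thesis by (simp add: rev_map[symmetric])
qed

text \<open>Gluing the reversed path of \<open>beta i l1\<close> to the path of \<open>beta i l2\<close> is a bijection onto
  the walks with \<open>l1 + l2\<close> steps, \<open>i\<close> being the vertex at position \<open>l1\<close>.\<close>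
lemma sum_beta_mult_beta_eq_sum_walks:
  "(\<Sum>i<N. beta N x i l1 * beta N x i l2)
    = (\<Sum>w\<in>walks N (l1 + l2 + 1). prod_list (map x (walk_edges w)))"
proof -
  define P where "P l = {p. length p = l \<and> set p \<subseteq> {..<N}}" for l
  define E where "E w = prod_list (map x (walk_edges w))" for w
  have nth_less: "set vs \<subseteq> {..<N} \<Longrightarrow> k < length vs \<Longrightarrow> vs ! k < N" for vs :: "nat list" and k
    using nth_mem by blast
  have "(\<Sum>i<N. beta N x i l1 * beta N x i l2) = (\<Sum>i<N. \<Sum>p\<in>P l1. \<Sum>q\<in>P l2. E (rev p @ i # q))"
    by (simp add: beta_eq_sum_walks sum_product prod_list_walk_edges_rev_append E_def P_def)
  also have "\<dots> = (\<Sum>(i, p, q)\<in>{..<N} \<times> P l1 \<times> P l2. E (rev p @ i # q))"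
    by (simp add: sum.cartesian_product)
  also have "\<dots> = (\<Sum>w\<in>walks N (l1 + l2 + 1). E w)"
    by (rule sum.reindex_bij_witness[where j = "\<lambda>(i, p, q). rev p @ i # q"
          and i = "\<lambda>w. (w ! l1, rev (take l1 w), drop (Suc l1) w)"])
      (auto simp: P_def walks_def nth_append id_take_nth_drop[symmetric] nth_less
        dest: in_set_takeD in_set_dropD)
  finally show ?thesis by (simp add: E_def)
qed

lemma Bmom_eq_sum_walk_weight:
  assumes "0 < \<rho>" "1 \<le> N"
  shows "Bmom N \<rho> \<alpha> l1 l2
    = (\<rho> / real N powr \<alpha>) ^ (l1 + l2) * (\<Sum>w\<in>walks N (l1 + l2 + 1). walk_weight w)"
proof -
  let ?W = "walks N (l1 + l2 + 1)"
  have "Bmom N \<rho> \<alpha> l1 l2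
      = integral\<^sup>L (entry_space N \<rho> \<alpha>) (\<lambda>x. \<Sum>w\<in>?W. prod_list (map x (walk_edges w)))"
    unfolding Bmom_def by (simp add: sum_beta_mult_beta_eq_sum_walks)
  also have "\<dots> = (\<Sum>w\<in>?W. integral\<^sup>L (entry_space N \<rho> \<alpha>) (\<lambda>x. prod_list (map x (walk_edges w))))"
    using integrable_and_integral_walk_monomial(1)[OF assms]
    by (intro Bochner_Integration.integral_sum) (auto simp: walks_def)
  also have "\<dots> = (\<Sum>w\<in>?W. (\<rho> / real N powr \<alpha>) ^ (l1 + l2) * walk_weight w)"
    using integrable_and_integral_walk_monomial(2)[OF assms]
    by (intro sum.cong) (auto simp: walks_def length_walk_edges)
  finally show ?thesis by (simp add: sum_distrib_left)
qed

lemma sum_walk_weight_split: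
  "(\<Sum>w\<in>walks N (2 * n + 1). walk_weight w)
    = real (card (dyck_paths n) * card (distinct_lists (n + 1) N))
      + (\<Sum>w\<in>{w \<in> walks N (2 * n + 1). card (set w) \<le> n}. walk_weight w)"
proof -
  let ?many = "{w \<in> walks N (2 * n + 1). n + 1 \<le> card (set w)}"
  let ?few = "{w \<in> walks N (2 * n + 1). card (set w) \<le> n}"
  have "(\<Sum>w\<in>?many \<union> ?few. walk_weight w)
      = (\<Sum>w\<in>?many. walk_weight w) + (\<Sum>w\<in>?few. walk_weight w)"
    by (rule sum.union_disjoint) (auto simp: finite_walks)
  moreover have "?many \<union> ?few = walks N (2 * n + 1)" by auto
  moreover have "(\<Sum>w\<in>?many. walk_weight w) = (\<Sum>w\<in>{w. tree_walk n N w}. walk_weight w)"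
  proof (rule sum.mono_neutral_right)
    show "\<forall>w\<in>?many - {w. tree_walk n N w}. walk_weight w = 0"
      using walk_weight_odd_count by (auto simp: tree_walk_def walks_def)
    show "finite ?many" by (rule finite_subset[OF _ finite_walks]) auto
  qed (auto simp: tree_walk_def walks_def)
  moreover have "(\<Sum>w\<in>{w. tree_walk n N w}. walk_weight w) = card {w. tree_walk n N w}"
    by (simp add: walk_weight_tree_walk)
  ultimately show ?thesis by (simp add: card_tree_walks)
qed

lemma sum_walk_weight_few_vertices_le:
  "(\<Sum>w\<in>{w \<in> walks N (2 * n + 1). card (set w) \<le> n}. walk_weight w)
    \<le> gauss_moment (2 * n) * (real n ^ (2 * n) * real N ^ n)"
proof -
  let ?few = "{w \<in> walks N (2 * n + 1). card (set w) \<le> n}"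
  have "walk_weight w \<le> gauss_moment (2 * n)" if "w \<in> ?few" for w
    using walk_weight_le[of w] that by (simp add: walks_def length_walk_edges)
  then have "(\<Sum>w\<in>?few. walk_weight w) \<le> (\<Sum>w\<in>?few. gauss_moment (2 * n))"
    by (rule sum_mono)
  also have "\<dots> = gauss_moment (2 * n) * card ?few" by simp
  also have "\<dots> \<le> gauss_moment (2 * n) * (real n ^ (2 * n) * real N ^ n)"
    using card_walks_few_vertices_le[of N n] gauss_moment_nonneg
    by (intro mult_left_mono) (simp_all flip: of_nat_power of_nat_mult)
  finally show ?thesis .
qed

lemma card_distinct_lists:
  "k \<le> N \<Longrightarrow> real (card (distinct_lists k N)) = (\<Prod>i<k. real N - real i)"
proof -
  assume "k \<le> N"
  have "card (distinct_lists k N) = \<Prod>{N - k + 1..N}"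
    unfolding distinct_lists_def using card_lists_distinct_length_eq[of "{..<N}" k] \<open>k \<le> N\<close>
    by (simp add: conj_commute)
  also have "\<dots> = (\<Prod>i<k. N - i)"
    by (rule prod.reindex_bij_witness[where i = "\<lambda>i. N - i" and j = "\<lambda>i. N - i"])
      (use \<open>k \<le> N\<close> in auto)
  finally show ?thesis using \<open>k \<le> N\<close> by (simp add: of_nat_diff)
qed

lemma card_distinct_lists_le: "card (distinct_lists k N) \<le> N ^ k"
proof -
  have "card (distinct_lists k N) \<le> card {vs. set vs \<subseteq> {..<N} \<and> length vs = k}"
    unfolding distinct_lists_def by (rule card_mono[OF finite_lists_length_eq]) auto
  then show ?thesis by (simp add: card_lists_length_eq)
qed

lemma powr_scaled_exponent:
  assumes "0 < x"
  shows "x powr (real (2 * n) * (1 / 2 - \<alpha>) + real k) = x ^ (n + k) / x powr (\<alpha> * real (2 * n))"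
proof -
  have "real (2 * n) * (1 / 2 - \<alpha>) + real k = real (n + k) - \<alpha> * real (2 * n)"
    by (simp add: algebra_simps)
  then show ?thesis by (simp only: powr_diff powr_realpow[OF assms])
qed

lemma Bmom_odd:
  assumes "0 < \<rho>" "1 \<le> N" "odd (l1 + l2)"
  shows "Bmom N \<rho> \<alpha> l1 l2 = 0"
proof -
  have "walk_weight w = 0" if "w \<in> walks N (l1 + l2 + 1)" for w
    using that assms(3) by (intro walk_weight_odd_length) (simp add: walks_def length_walk_edges)
  then show ?thesis by (simp add: Bmom_eq_sum_walk_weight[OF assms(1,2)])
qed

lemma Bmom_eq_scaled_sum_walk_weight:
  assumes "0 < \<rho>" "l1 + l2 = 2 * n" "n + 1 \<le> N"
  shows "Bmom N \<rho> \<alpha> l1 l2 = \<rho> ^ (2 * n) / real N powr (\<alpha> * real (2 * n))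
    * (\<Sum>w\<in>walks N (2 * n + 1). walk_weight w)"
proof -
  have "(\<rho> / real N powr \<alpha>) ^ (2 * n) = \<rho> ^ (2 * n) / real N powr (\<alpha> * real (2 * n))"
    using assms(3) powr_power[of "real N" \<alpha> "2 * n"] by (simp add: power_divide mult.commute)
  then show ?thesis using Bmom_eq_sum_walk_weight[of \<rho> N \<alpha> l1 l2] assms by simp
qed

lemma Bmom_lower_bound:
  assumes "0 < \<rho>" "l1 + l2 = 2 * n" "n + 1 \<le> N"
  shows "\<rho> ^ (2 * n) / (real n + 1) * real ((2 * n) choose n) * (\<Prod>k\<in>{0..n}. real N - real k)
      / real N powr (\<alpha> * real (2 * n)) \<le> Bmom N \<rho> \<alpha> l1 l2" (is "?lhs \<le> _")
proof -
  define K where "K = \<rho> ^ (2 * n) / real N powr (\<alpha> * real (2 * n))"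
  have "0 \<le> K" using assms(1) by (simp add: K_def)
  note central_binomial_eq_card_dyck_paths[of n]
  moreover have "(\<Prod>k\<in>{0..n}. real N - real k) = real (card (distinct_lists (n + 1) N))"
    using card_distinct_lists[OF assms(3)] by (simp add: atLeast0AtMost lessThan_Suc_atMost)
  ultimately have "?lhs = K * real (card (dyck_paths n) * card (distinct_lists (n + 1) N))"
    by (simp add: K_def)
  also have "\<dots> \<le> K * (\<Sum>w\<in>walks N (2 * n + 1). walk_weight w)"
  proof (rule mult_left_mono[OF _ \<open>0 \<le> K\<close>])
    have "0 \<le> (\<Sum>w\<in>{w \<in> walks N (2 * n + 1). card (set w) \<le> n}. walk_weight w)"
      by (intro sum_nonneg walk_weight_nonneg)
    then show "real (card (dyck_paths n) * card (distinct_lists (n + 1) N))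
        \<le> (\<Sum>w\<in>walks N (2 * n + 1). walk_weight w)"
      using sum_walk_weight_split[of N n] by linarith
  qed
  also have "\<dots> = Bmom N \<rho> \<alpha> l1 l2"
    using Bmom_eq_scaled_sum_walk_weight[OF assms] by (simp add: K_def)
  finally show ?thesis .
qed

lemma Bmom_upper_bound:
  assumes "0 < \<rho>" "l1 + l2 = 2 * n" "n + 1 \<le> N"
  shows "Bmom N \<rho> \<alpha> l1 l2
    \<le> \<rho> ^ (2 * n) / (real n + 1) * real ((2 * n) choose n)
        * real N powr (real (2 * n) * (1 / 2 - \<alpha>) + 1)
      + \<rho> ^ (2 * n) * gauss_moment (2 * n) * real n ^ (2 * n)
        * real N powr (real (2 * n) * (1 / 2 - \<alpha>))" (is "_ \<le> ?rhs")
proof -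
  define K where "K = \<rho> ^ (2 * n) / real N powr (\<alpha> * real (2 * n))"
  have "0 \<le> K" using assms(1) by (simp add: K_def)
  have "0 < real N" using assms(3) by simp
  have "Bmom N \<rho> \<alpha> l1 l2 = K * (\<Sum>w\<in>walks N (2 * n + 1). walk_weight w)"
    using Bmom_eq_scaled_sum_walk_weight[OF assms] by (simp add: K_def)
  also have "\<dots> \<le> K * (real (card (dyck_paths n)) * real N ^ (n + 1)
      + gauss_moment (2 * n) * (real n ^ (2 * n) * real N ^ n))"
  proof (rule mult_left_mono[OF _ \<open>0 \<le> K\<close>])
    have "real (card (distinct_lists (n + 1) N)) \<le> real N ^ (n + 1)"
      using card_distinct_lists_le[of "n + 1" N] by (metis of_nat_le_iff of_nat_power)
    then show "(\<Sum>w\<in>walks N (2 * n + 1). walk_weight w)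
        \<le> real (card (dyck_paths n)) * real N ^ (n + 1)
          + gauss_moment (2 * n) * (real n ^ (2 * n) * real N ^ n)"
      using sum_walk_weight_split[of N n] sum_walk_weight_few_vertices_le[of N n]
      by (simp add: mult_left_mono add_mono)
  qed
  also have "\<dots> = ?rhs"
  proof -
    note central_binomial_eq_card_dyck_paths[of n]
    moreover have "real N powr (real (2 * n) * (1 / 2 - \<alpha>) + 1)
        = real N ^ (n + 1) / real N powr (\<alpha> * real (2 * n))"
      using powr_scaled_exponent[OF \<open>0 < real N\<close>, of n \<alpha> 1] by simp
    moreover have "real N powr (real (2 * n) * (1 / 2 - \<alpha>))
        = real N ^ n / real N powr (\<alpha> * real (2 * n))"
      using powr_scaled_exponent[OF \<open>0 < real N\<close>, of n \<alpha> 0] by simp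
    ultimately show ?thesis
      using \<open>0 < real N\<close> by (simp add: K_def field_simps)
  qed
  finally show ?thesis .
qed

theorem mainTheorem7:
  fixes N T l1 l2 :: nat and \<rho> \<alpha> :: real
  assumes "N \<ge> 1" "T \<ge> 1" "\<rho> > 0" "l1 \<le> T" "l2 \<le> T"
  shows "(odd (l1 + l2) \<longrightarrow> Bmom N \<rho> \<alpha> l1 l2 = 0)
       \<and> (even (l1 + l2) \<and> (l1 + l2) div 2 + 1 \<le> N \<longrightarrow>
           (let s = l1 + l2 in
             \<rho> ^ s / (real (s div 2) + 1) * real (s choose (s div 2))
               * (\<Prod>k\<in>{0..s div 2}. real N - real k) / real N powr (\<alpha> * real s)
             \<le> Bmom N \<rho> \<alpha> l1 l2
           \<and> Bmom N \<rho> \<alpha> l1 l2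
             \<le> \<rho> ^ s / (real (s div 2) + 1) * real (s choose (s div 2))
                 * real N powr (real s * (1/2 - \<alpha>) + 1)
               + \<rho> ^ s * gauss_moment s * (real s / 2) ^ s * real N powr (real s * (1/2 - \<alpha>))))"
proof (cases "even (l1 + l2) \<and> (l1 + l2) div 2 + 1 \<le> N")
  case True
  then obtain n where "l1 + l2 = 2 * n" by blast
  with True have n: "l1 + l2 = 2 * n" "n + 1 \<le> N" by simp_all
  then show ?thesis
    using Bmom_lower_bound[OF assms(3) n, of \<alpha>] Bmom_upper_bound[OF assms(3) n, of \<alpha>]
    by (simp add: Let_def)
next
  case False
  then show ?thesis using Bmom_odd[OF assms(3,1)] by auto
qed

end
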